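(* Let $S$ be an inverse semigroup and $\alpha=(A_s,\alpha_s)_{s\in S}$ a partial action of $S$ on a ring $A$. Define $\gamma_\alpha:S\to\mathcal{I}(A)$ by letting $\gamma_\alpha(s)$ be the bijection $A_{s^{-1}}\to A_s$ (between subsets of the underlying set of $A$) given by $\gamma_\alpha(s)(a)=\alpha_s(a)$. Then $\gamma_\alpha$ is an inverse semigroup premorphism.
   Context: $S$ is an inverse semigroup with set of idempotents $E(S)$ and natural partial order $s\preceq t$ iff $s=te$ for some $e\in E(S)$. A partial action of $S$ on a ring $A$ is a family of ideals $A_{ss^{-1}}$ of $A$, ideals $A_s$ of $A_{ss^{-1}}$, and ring isomorphisms $\alpha_s:A_{s^{-1}}\to A_s$ ($s\in S$) such that (P1') $A=\sum_{e\in E(S)}A_e$; (P2') $\alpha_s(A_{s^{-1}}\cap A_t)=A_s\cap A_{st}$ for all $s,t$; (P3') $\alpha_s(\alpha_t(a))=\alpha_{st}(a)$ for all $a\in A_{t^{-1}}\cap A_{(st)^{-1}}$. $\mathcal{I}(A)$ is the symmetric inverse semigroup of all bijections between subsets of the underlying set of $A$, under composition of partial maps. A map $\psi:S\to T$ between inverse semigroups is a premorphism if for all $s,t\in S$: (i) $\psi(s)\psi(t)\preceq\psi(st)$; (ii) $\psi(s)^{-1}=\psi(s^{-1})$; (iii) $s\preceq t$ implies $\psi(s)\preceq\psi(t)$. *)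

theory Defs
  imports Main
begin

definition semigroup_on :: "'s set \<Rightarrow> ('s \<Rightarrow> 's \<Rightarrow> 's) \<Rightarrow> bool" where
  "semigroup_on S m \<longleftrightarrow> (\<forall>x\<in>S. \<forall>y\<in>S. m x y \<in> S) \<and>
     (\<forall>x\<in>S. \<forall>y\<in>S. \<forall>z\<in>S. m (m x y) z = m x (m y z))"

definition inverse_semigroup :: "'s set \<Rightarrow> ('s \<Rightarrow> 's \<Rightarrow> 's) \<Rightarrow> bool" where
  "inverse_semigroup S m \<longleftrightarrow> semigroup_on S m \<and>
     (\<forall>s\<in>S. \<exists>!t. t \<in> S \<and> m (m s t) s = s \<and> m (m t s) t = t)"

definition sinv :: "'s set \<Rightarrow> ('s \<Rightarrow> 's \<Rightarrow> 's) \<Rightarrow> 's \<Rightarrow> 's" where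
  "sinv S m s = (THE t. t \<in> S \<and> m (m s t) s = s \<and> m (m t s) t = t)"

definition idems :: "'s set \<Rightarrow> ('s \<Rightarrow> 's \<Rightarrow> 's) \<Rightarrow> 's set" where
  "idems S m = {e \<in> S. m e e = e}"

definition nat_le :: "'s set \<Rightarrow> ('s \<Rightarrow> 's \<Rightarrow> 's) \<Rightarrow> 's \<Rightarrow> 's \<Rightarrow> bool" where
  "nat_le S m s t \<longleftrightarrow> (\<exists>e\<in>idems S m. s = m t e)"

definition premorphism ::
  "'s set \<Rightarrow> ('s \<Rightarrow> 's \<Rightarrow> 's) \<Rightarrow> 't set \<Rightarrow> ('t \<Rightarrow> 't \<Rightarrow> 't) \<Rightarrow> ('s \<Rightarrow> 't) \<Rightarrow> bool" where
  "premorphism S m T n \<psi> \<longleftrightarrow>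
     (\<forall>s\<in>S. \<psi> s \<in> T) \<and>
     (\<forall>s\<in>S. \<forall>t\<in>S. nat_le T n (n (\<psi> s) (\<psi> t)) (\<psi> (m s t))) \<and>
     (\<forall>s\<in>S. sinv T n (\<psi> s) = \<psi> (sinv S m s)) \<and>
     (\<forall>s\<in>S. \<forall>t\<in>S. nat_le S m s t \<longrightarrow> nat_le T n (\<psi> s) (\<psi> t))"

text \<open>Partial bijections between subsets, represented as injective partial maps;
  product = composition of partial maps (f g means: first g, then f).\<close>
definition sym_inv_carrier :: "('a \<Rightarrow> 'a option) set" where
  "sym_inv_carrier = {f. inj_on f (dom f)}"

definition sym_inv_mult :: "('a \<Rightarrow> 'a option) \<Rightarrow> ('a \<Rightarrow> 'a option) \<Rightarrow> ('a \<Rightarrow> 'a option)" where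
  "sym_inv_mult f g = f \<circ>\<^sub>m g"

definition ideal_in :: "'a::ring set \<Rightarrow> 'a set \<Rightarrow> bool" where
  "ideal_in I R \<longleftrightarrow> I \<subseteq> R \<and> 0 \<in> I \<and>
     (\<forall>x\<in>I. \<forall>y\<in>I. x + y \<in> I) \<and> (\<forall>x\<in>I. - x \<in> I) \<and>
     (\<forall>r\<in>R. \<forall>x\<in>I. r * x \<in> I \<and> x * r \<in> I)"

definition ring_iso_betw :: "('a::ring \<Rightarrow> 'a) \<Rightarrow> 'a set \<Rightarrow> 'a set \<Rightarrow> bool" where
  "ring_iso_betw f X Y \<longleftrightarrow> bij_betw f X Y \<and>
     (\<forall>x\<in>X. \<forall>y\<in>X. f (x + y) = f x + f y \<and> f (x * y) = f x * f y)"

text \<open>Partial action (A_s, alpha_s) of the inverse semigroup (S, m) on the ring 'a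
  (the whole type), axioms (P1')--(P3').\<close>
definition partial_action ::
  "'s set \<Rightarrow> ('s \<Rightarrow> 's \<Rightarrow> 's) \<Rightarrow> ('s \<Rightarrow> 'a::ring set) \<Rightarrow> ('s \<Rightarrow> 'a \<Rightarrow> 'a) \<Rightarrow> bool" where
  "partial_action S m D \<alpha> \<longleftrightarrow>
     (\<forall>s\<in>S. ideal_in (D (m s (sinv S m s))) UNIV) \<and>
     (\<forall>s\<in>S. ideal_in (D s) (D (m s (sinv S m s)))) \<and>
     (\<forall>s\<in>S. ring_iso_betw (\<alpha> s) (D (sinv S m s)) (D s)) \<and>
     (\<forall>a. \<exists>F x. finite F \<and> F \<subseteq> idems S m \<and> (\<forall>e\<in>F. x e \<in> D e) \<and> a = sum x F) \<and>
     (\<forall>s\<in>S. \<forall>t\<in>S. \<alpha> s ` (D (sinv S m s) \<inter> D t) = D s \<inter> D (m s t)) \<and>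
     (\<forall>s\<in>S. \<forall>t\<in>S. \<forall>a \<in> D (sinv S m t) \<inter> D (sinv S m (m s t)).
        \<alpha> s (\<alpha> t a) = \<alpha> (m s t) a)"

definition gamma_act ::
  "'s set \<Rightarrow> ('s \<Rightarrow> 's \<Rightarrow> 's) \<Rightarrow> ('s \<Rightarrow> 'a set) \<Rightarrow> ('s \<Rightarrow> 'a \<Rightarrow> 'a) \<Rightarrow> 's \<Rightarrow> 'a \<Rightarrow> 'a option" where
  "gamma_act S m D \<alpha> s = (\<lambda>a. if a \<in> D (sinv S m s) then Some (\<alpha> s a) else None)"

end

theory Submission
  imports Defs
begin

text \<open>
  The inverse of \<open>\<gamma>(s)\<close> in \<open>\<I>(A)\<close> is the converse map, and this is \<open>\<gamma>(s\<^sup>-\<^sup>1)\<close> because \<open>\<alpha>\<^bsub>s\<^sup>-\<^sup>1\<^esub> \<alpha>\<^sub>s = \<alpha>\<^bsub>s\<^sup>-\<^sup>1s\<^esub>\<close> by (P3'), and \<open>\<alpha>\<^sub>e\<close> is the identity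
  on \<open>A\<^sub>e\<close> for every idempotent \<open>e\<close>. In \<open>\<I>(A)\<close> every restriction \<open>f|\<^sub>X = f 1\<^sub>X\<close> lies below \<open>f\<close>.
  By (P2') and (P3'), \<open>\<gamma>(s)\<gamma>(t)\<close> is the restriction of \<open>\<gamma>(st)\<close> to the set of those
  \<open>a \<in> A\<^bsub>t\<^sup>-\<^sup>1\<^esub>\<close> with \<open>\<alpha>\<^sub>t a \<in> A\<^bsub>s\<^sup>-\<^sup>1\<^esub>\<close>; and if \<open>s \<preceq> t\<close>, then \<open>s = t(s\<^sup>-\<^sup>1s)\<close>, so \<open>\<gamma>(s)\<close> is the
  restriction of \<open>\<gamma>(t)\<close> to \<open>A\<^bsub>s\<^sup>-\<^sup>1\<^esub>\<close>.
\<close>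

locale inv_semigroup =
  fixes S :: "'s set" and m :: "'s \<Rightarrow> 's \<Rightarrow> 's" (infixl "\<cdot>" 70)
  assumes inverse_semigroup: "inverse_semigroup S m"
begin

abbreviation sinv_S :: "'s \<Rightarrow> 's" ("_\<^sup>-\<^sup>1" [1000] 999)
  where "s\<^sup>-\<^sup>1 \<equiv> sinv S m s"

lemma mult_closed [simp]: "x \<in> S \<Longrightarrow> y \<in> S \<Longrightarrow> x \<cdot> y \<in> S"
  using inverse_semigroup unfolding inverse_semigroup_def semigroup_on_def by blast

lemma mult_assoc [simp]: "x \<in> S \<Longrightarrow> y \<in> S \<Longrightarrow> z \<in> S \<Longrightarrow> x \<cdot> y \<cdot> z = x \<cdot> (y \<cdot> z)"
  using inverse_semigroup unfolding inverse_semigroup_def semigroup_on_def by blast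

lemma ex1_sinv: "s \<in> S \<Longrightarrow> \<exists>!t. t \<in> S \<and> s \<cdot> t \<cdot> s = s \<and> t \<cdot> s \<cdot> t = t"
  using inverse_semigroup unfolding inverse_semigroup_def by blast

lemma sinv_closed [simp]: "s \<in> S \<Longrightarrow> s\<^sup>-\<^sup>1 \<in> S"
  and mult_sinv_mult [simp]: "s \<in> S \<Longrightarrow> s \<cdot> (s\<^sup>-\<^sup>1 \<cdot> s) = s"
  and sinv_mult_sinv [simp]: "s \<in> S \<Longrightarrow> s\<^sup>-\<^sup>1 \<cdot> (s \<cdot> s\<^sup>-\<^sup>1) = s\<^sup>-\<^sup>1"
  using theI'[OF ex1_sinv, of s] unfolding sinv_def by auto

lemma sinv_unique:
  assumes "s \<in> S" "t \<in> S" "s \<cdot> (t \<cdot> s) = s" "t \<cdot> (s \<cdot> t) = t"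
  shows "s\<^sup>-\<^sup>1 = t"
  unfolding sinv_def using assms by (intro the1_equality ex1_sinv) auto

lemma sinv_sinv [simp]: "s \<in> S \<Longrightarrow> (s\<^sup>-\<^sup>1)\<^sup>-\<^sup>1 = s"
  by (rule sinv_unique) auto

lemma mult_sinv_mult_left [simp]: "s \<in> S \<Longrightarrow> z \<in> S \<Longrightarrow> s \<cdot> (s\<^sup>-\<^sup>1 \<cdot> (s \<cdot> z)) = s \<cdot> z"
  by (metis mult_assoc mult_closed mult_sinv_mult sinv_closed)

lemma sinv_mult_sinv_left [simp]: "s \<in> S \<Longrightarrow> z \<in> S \<Longrightarrow> s\<^sup>-\<^sup>1 \<cdot> (s \<cdot> (s\<^sup>-\<^sup>1 \<cdot> z)) = s\<^sup>-\<^sup>1 \<cdot> z"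
  by (metis mult_sinv_mult_left sinv_closed sinv_sinv)

lemma idems_closed [simp]: "e \<in> idems S m \<Longrightarrow> e \<in> S"
  and idem_mult_self [simp]: "e \<in> idems S m \<Longrightarrow> e \<cdot> e = e"
  unfolding idems_def by blast+

lemma idemsI: "e \<in> S \<Longrightarrow> e \<cdot> e = e \<Longrightarrow> e \<in> idems S m"
  unfolding idems_def by blast

lemma idem_mult_left [simp]: "e \<in> idems S m \<Longrightarrow> z \<in> S \<Longrightarrow> e \<cdot> (e \<cdot> z) = e \<cdot> z"
  by (metis idem_mult_self idems_closed mult_assoc)

lemma sinv_idem: "e \<in> idems S m \<Longrightarrow> e\<^sup>-\<^sup>1 = e"
  by (rule sinv_unique) simp_all

lemma mult_sinv_idem: "s \<in> S \<Longrightarrow> s \<cdot> s\<^sup>-\<^sup>1 \<in> idems S m"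
  and sinv_mult_idem: "s \<in> S \<Longrightarrow> s\<^sup>-\<^sup>1 \<cdot> s \<in> idems S m"
  by (rule idemsI; simp)+

text \<open>With \<open>a = ef\<close>, the element \<open>f a\<^sup>-\<^sup>1 e\<close> is again an inverse of \<open>a\<close>, hence equals \<open>a\<^sup>-\<^sup>1\<close>;
  it is visibly idempotent, and so is its inverse \<open>a\<close>.\<close>
lemma idem_mult_closed:
  assumes e: "e \<in> idems S m" and f: "f \<in> idems S m"
  shows "e \<cdot> f \<in> idems S m"
proof -
  define a where "a = e \<cdot> f"
  define y where "y = f \<cdot> (a\<^sup>-\<^sup>1 \<cdot> e)"
  have a: "a \<in> S" and y: "y \<in> S" using e f by (simp_all add: a_def y_def)
  have ef: "e \<cdot> (f \<cdot> z) = a \<cdot> z" and af: "a \<cdot> (f \<cdot> z) = a \<cdot> z"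
    and ea: "e \<cdot> (a \<cdot> z) = a \<cdot> z" if "z \<in> S" for z
    using e f that by (simp_all add: a_def)
  have ea': "e \<cdot> a = a" using e f by (simp add: a_def)
  have "a \<cdot> (y \<cdot> a) = a" using a e f by (simp add: y_def af ea')
  moreover have "y \<cdot> (a \<cdot> y) = y" using a e f by (simp add: y_def af ea ef)
  ultimately have sinv_a: "a\<^sup>-\<^sup>1 = y" using sinv_unique[OF a y] by blast
  have "y \<cdot> y = y" using a e f by (simp add: y_def ef)
  then have "y \<in> idems S m" using y by (rule idemsI[rotated])
  then have "a \<in> idems S m" using sinv_a sinv_idem sinv_sinv[OF a] by metis
  then show ?thesis by (simp only: a_def)
qed

lemma idems_commute:
  assumes e: "e \<in> idems S m" and f: "f \<in> idems S m"
  shows "e \<cdot> f = f \<cdot> e"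
proof -
  have ef: "e \<cdot> f \<in> idems S m" and fe: "f \<cdot> e \<in> idems S m"
    using idem_mult_closed e f by auto
  have "(e \<cdot> f)\<^sup>-\<^sup>1 = f \<cdot> e"
    by (rule sinv_unique) (use idem_mult_self[OF ef] idem_mult_self[OF fe] e f in simp_all)
  then show ?thesis using sinv_idem[OF ef] by simp
qed

lemma idems_commute_left:
  "e \<in> idems S m \<Longrightarrow> f \<in> idems S m \<Longrightarrow> z \<in> S \<Longrightarrow> e \<cdot> (f \<cdot> z) = f \<cdot> (e \<cdot> z)"
  by (metis idems_commute idems_closed mult_assoc)

lemma sinv_mult:
  assumes s: "s \<in> S" and t: "t \<in> S"
  shows "(s \<cdot> t)\<^sup>-\<^sup>1 = t\<^sup>-\<^sup>1 \<cdot> s\<^sup>-\<^sup>1"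
proof (rule sinv_unique)
  have swap: "t \<cdot> (t\<^sup>-\<^sup>1 \<cdot> (s\<^sup>-\<^sup>1 \<cdot> (s \<cdot> z))) = s\<^sup>-\<^sup>1 \<cdot> (s \<cdot> (t \<cdot> (t\<^sup>-\<^sup>1 \<cdot> z)))" if "z \<in> S" for z
    using idems_commute_left[OF mult_sinv_idem[OF t] sinv_mult_idem[OF s] that] s t that by simp
  show "s \<cdot> t \<cdot> (t\<^sup>-\<^sup>1 \<cdot> s\<^sup>-\<^sup>1 \<cdot> (s \<cdot> t)) = s \<cdot> t"
    using swap[of t] s t by simp
  have "t\<^sup>-\<^sup>1 \<cdot> s\<^sup>-\<^sup>1 \<cdot> (s \<cdot> t \<cdot> (t\<^sup>-\<^sup>1 \<cdot> s\<^sup>-\<^sup>1)) = t\<^sup>-\<^sup>1 \<cdot> (t \<cdot> (t\<^sup>-\<^sup>1 \<cdot> (s\<^sup>-\<^sup>1 \<cdot> (s \<cdot> s\<^sup>-\<^sup>1))))"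
    using swap[of "s\<^sup>-\<^sup>1"] s t by simp
  then show "t\<^sup>-\<^sup>1 \<cdot> s\<^sup>-\<^sup>1 \<cdot> (s \<cdot> t \<cdot> (t\<^sup>-\<^sup>1 \<cdot> s\<^sup>-\<^sup>1)) = t\<^sup>-\<^sup>1 \<cdot> s\<^sup>-\<^sup>1"
    using s t by simp
qed (use s t in auto)

lemma nat_le_iff:
  assumes s: "s \<in> S" and t: "t \<in> S"
  shows "nat_le S m s t \<longleftrightarrow> s = t \<cdot> (s\<^sup>-\<^sup>1 \<cdot> s)"
proof
  assume "nat_le S m s t"
  then obtain e where e: "e \<in> idems S m" and st: "s = t \<cdot> e"
    unfolding nat_le_def by blast
  have eS: "e \<in> S" using e by simp
  have "s\<^sup>-\<^sup>1 \<cdot> s = e \<cdot> (t\<^sup>-\<^sup>1 \<cdot> (t \<cdot> e))"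
    using st sinv_mult[OF t eS] sinv_idem[OF e] t eS by simp
  then have "t \<cdot> (s\<^sup>-\<^sup>1 \<cdot> s) = t \<cdot> (t\<^sup>-\<^sup>1 \<cdot> (t \<cdot> e))"
    using idems_commute_left[OF e sinv_mult_idem[OF t] eS] t eS e by simp
  then show "s = t \<cdot> (s\<^sup>-\<^sup>1 \<cdot> s)" using st t eS by simp
next
  assume "s = t \<cdot> (s\<^sup>-\<^sup>1 \<cdot> s)"
  then show "nat_le S m s t" unfolding nat_le_def using sinv_mult_idem[OF s] by blast
qed

end

lemma map_comp_inner_inverse_iff:
  assumes f: "inj_on f (dom f)" and g: "inj_on g (dom g)"
    and fgf: "f \<circ>\<^sub>m g \<circ>\<^sub>m f = f" and gfg: "g \<circ>\<^sub>m f \<circ>\<^sub>m g = g"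
  shows "g y = Some x \<longleftrightarrow> f x = Some y"
proof
  assume gy: "g y = Some x"
  have "(g \<circ>\<^sub>m f \<circ>\<^sub>m g) y = Some x" using gfg gy by simp
  then obtain w where "f x = Some w" "g w = Some x" using gy
    by (auto simp: map_comp_def split: option.splits)
  moreover have "w = y" using g gy \<open>g w = Some x\<close> by (auto simp: inj_on_def dom_def)
  ultimately show "f x = Some y" by simp
next
  assume fx: "f x = Some y"
  have "(f \<circ>\<^sub>m g \<circ>\<^sub>m f) x = Some y" using fgf fx by simp
  then obtain z where "g y = Some z" "f z = Some y" using fx
    by (auto simp: map_comp_def split: option.splits)
  moreover have "z = x" using f fx \<open>f z = Some y\<close> by (auto simp: inj_on_def dom_def)
  ultimately show "g y = Some x" by simp
qed

lemma sinv_sym_inv_eq_converse: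
  assumes conv: "\<And>x y. g y = Some x \<longleftrightarrow> f x = Some y"
  shows "sinv sym_inv_carrier sym_inv_mult f = g"
proof -
  have inj_f: "inj_on f (dom f)" and inj_g: "inj_on g (dom g)"
    by (rule inj_onI; metis conv domD option.inject)+
  have fgf: "f \<circ>\<^sub>m g \<circ>\<^sub>m f = f"
    by (rule ext) (metis conv map_comp_simps option.exhaust)
  have gfg: "g \<circ>\<^sub>m f \<circ>\<^sub>m g = g"
    by (rule ext) (metis conv map_comp_simps option.exhaust)
  have unique: "h = g" if "h \<in> sym_inv_carrier"
      "sym_inv_mult (sym_inv_mult f h) f = f" "sym_inv_mult (sym_inv_mult h f) h = h" for h
  proof
    fix y
    have "h y = Some x \<longleftrightarrow> g y = Some x" for x
      unfolding conv by (rule map_comp_inner_inverse_iff)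
        (use inj_f that in \<open>simp_all add: sym_inv_carrier_def sym_inv_mult_def\<close>)
    then show "h y = g y" by (metis option.exhaust)
  qed
  show ?thesis
    unfolding sinv_def
  proof (rule the_equality)
    show "g \<in> sym_inv_carrier \<and> sym_inv_mult (sym_inv_mult f g) f = f \<and>
        sym_inv_mult (sym_inv_mult g f) g = g"
      using inj_g fgf gfg by (simp add: sym_inv_carrier_def sym_inv_mult_def)
  qed (use unique in blast)
qed

lemma nat_le_sym_inv_restrict: "nat_le sym_inv_carrier sym_inv_mult (f |` X) f"
proof -
  have "Some |` X \<in> idems sym_inv_carrier sym_inv_mult"
    by (auto simp: idems_def sym_inv_carrier_def sym_inv_mult_def inj_on_def restrict_map_def
        map_comp_def)
  moreover have "f |` X = sym_inv_mult f (Some |` X)"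
    by (auto simp: sym_inv_mult_def restrict_map_def map_comp_def)
  ultimately show ?thesis unfolding nat_le_def by blast
qed

locale ring_partial_action = inv_semigroup S m for S :: "'s set" and m (infixl "\<cdot>" 70) +
  fixes D :: "'s \<Rightarrow> 'r::ring set" and \<alpha> :: "'s \<Rightarrow> 'r \<Rightarrow> 'r"
  assumes partial_action: "partial_action S m D \<alpha>"
begin

lemma domain_subset_domain_mult_sinv: "s \<in> S \<Longrightarrow> D s \<subseteq> D (s \<cdot> s\<^sup>-\<^sup>1)"
proof -
  assume "s \<in> S"
  then have "ideal_in (D s) (D (s \<cdot> s\<^sup>-\<^sup>1))" using partial_action by (simp add: partial_action_def)
  then show ?thesis by (simp add: ideal_in_def)
qed

lemma action_bij: "s \<in> S \<Longrightarrow> bij_betw (\<alpha> s) (D (s\<^sup>-\<^sup>1)) (D s)"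
proof -
  assume "s \<in> S"
  then have "ring_iso_betw (\<alpha> s) (D (s\<^sup>-\<^sup>1)) (D s)" using partial_action by (simp add: partial_action_def)
  then show ?thesis by (simp add: ring_iso_betw_def)
qed

lemma action_image: "s \<in> S \<Longrightarrow> t \<in> S \<Longrightarrow> \<alpha> s ` (D (s\<^sup>-\<^sup>1) \<inter> D t) = D s \<inter> D (s \<cdot> t)"
  using partial_action by (simp add: partial_action_def)

lemma action_comp:
  "s \<in> S \<Longrightarrow> t \<in> S \<Longrightarrow> a \<in> D (t\<^sup>-\<^sup>1) \<Longrightarrow> a \<in> D ((s \<cdot> t)\<^sup>-\<^sup>1) \<Longrightarrow> \<alpha> s (\<alpha> t a) = \<alpha> (s \<cdot> t) a"
  using partial_action by (simp add: partial_action_def)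

lemma action_maps_to: "s \<in> S \<Longrightarrow> a \<in> D (s\<^sup>-\<^sup>1) \<Longrightarrow> \<alpha> s a \<in> D s"
  using action_bij bij_betwE by blast

lemma action_idem:
  assumes e: "e \<in> idems S m" and a: "a \<in> D e"
  shows "\<alpha> e a = a"
proof -
  have eS: "e \<in> S" and ee: "e \<cdot> e = e" using e by simp_all
  note ie = sinv_idem[OF e]
  have "\<alpha> e (\<alpha> e a) = \<alpha> e a" using action_comp[OF eS eS, of a] a ie ee by simp
  moreover have "\<alpha> e a \<in> D e" using action_maps_to[OF eS] a ie by simp
  moreover have "inj_on (\<alpha> e) (D e)" using action_bij[OF eS] ie by (simp add: bij_betw_def)
  ultimately show ?thesis using a by (auto dest: inj_onD)
qed

lemma action_sinv_action:
  assumes s: "s \<in> S" and a: "a \<in> D (s\<^sup>-\<^sup>1)"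
  shows "\<alpha> (s\<^sup>-\<^sup>1) (\<alpha> s a) = a"
proof -
  have a': "a \<in> D (s\<^sup>-\<^sup>1 \<cdot> s)" using domain_subset_domain_mult_sinv[of "s\<^sup>-\<^sup>1"] s a by auto
  have "\<alpha> (s\<^sup>-\<^sup>1) (\<alpha> s a) = \<alpha> (s\<^sup>-\<^sup>1 \<cdot> s) a"
    using action_comp[of "s\<^sup>-\<^sup>1" s a] s a a' sinv_idem[OF sinv_mult_idem[OF s]] by simp
  also have "\<dots> = a" using action_idem[OF sinv_mult_idem[OF s] a'] .
  finally show ?thesis .
qed

lemma domain_idem_inter_eq:
  assumes e: "e \<in> idems S m" and t: "t \<in> S"
  shows "D e \<inter> D t = D e \<inter> D (e \<cdot> t)"
proof -
  have eS: "e \<in> S" using e by simp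
  have "\<alpha> e ` (D e \<inter> D t) = D e \<inter> D t"
    using action_idem[OF e] by (auto simp: image_iff)
  then show ?thesis using action_image[OF eS t] sinv_idem[OF e] by simp
qed

abbreviation \<gamma> :: "'s \<Rightarrow> 'r \<Rightarrow> 'r option" where
  "\<gamma> \<equiv> gamma_act S m D \<alpha>"

lemma gamma_Some_iff: "\<gamma> s a = Some b \<longleftrightarrow> a \<in> D (s\<^sup>-\<^sup>1) \<and> \<alpha> s a = b"
  by (auto simp: gamma_act_def)

lemma gamma_in_sym_inv_carrier: "s \<in> S \<Longrightarrow> \<gamma> s \<in> sym_inv_carrier"
  using action_bij[of s]
  by (auto simp: sym_inv_carrier_def gamma_act_def bij_betw_def inj_on_def dom_def)

lemma gamma_sinv_converse:
  assumes s: "s \<in> S"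
  shows "\<gamma> (s\<^sup>-\<^sup>1) b = Some a \<longleftrightarrow> \<gamma> s a = Some b"
  unfolding gamma_Some_iff
  using action_sinv_action[OF s] action_sinv_action[of "s\<^sup>-\<^sup>1"] action_maps_to[OF s]
    action_maps_to[of "s\<^sup>-\<^sup>1"] s
  by auto

lemma gamma_mult_eq_restrict:
  assumes s: "s \<in> S" and t: "t \<in> S"
  shows "\<gamma> s \<circ>\<^sub>m \<gamma> t = \<gamma> (s \<cdot> t) |` {a \<in> D (t\<^sup>-\<^sup>1). \<alpha> t a \<in> D (s\<^sup>-\<^sup>1)}"
proof
  fix a
  show "(\<gamma> s \<circ>\<^sub>m \<gamma> t) a = (\<gamma> (s \<cdot> t) |` {a \<in> D (t\<^sup>-\<^sup>1). \<alpha> t a \<in> D (s\<^sup>-\<^sup>1)}) a"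
  proof (cases "a \<in> D (t\<^sup>-\<^sup>1) \<and> \<alpha> t a \<in> D (s\<^sup>-\<^sup>1)")
    case True
    then have "\<alpha> (t\<^sup>-\<^sup>1) (\<alpha> t a) \<in> D (t\<^sup>-\<^sup>1) \<inter> D (t\<^sup>-\<^sup>1 \<cdot> s\<^sup>-\<^sup>1)"
      using action_image[of "t\<^sup>-\<^sup>1" "s\<^sup>-\<^sup>1"] action_maps_to[OF t] s t by auto
    then have "a \<in> D ((s \<cdot> t)\<^sup>-\<^sup>1)"
      using action_sinv_action[OF t] True sinv_mult[OF s t] by simp
    then show ?thesis
      using True action_comp[OF s t] by (simp add: gamma_act_def)
  next
    case False
    then show ?thesis by (auto simp: gamma_act_def map_comp_def)
  qed
qed

lemma gamma_restrict_of_nat_le: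
  assumes s: "s \<in> S" and t: "t \<in> S" and le: "nat_le S m s t"
  shows "\<gamma> s = \<gamma> t |` D (s\<^sup>-\<^sup>1)"
proof -
  define e where "e = s\<^sup>-\<^sup>1 \<cdot> s"
  have e: "e \<in> idems S m" and eS: "e \<in> S" using sinv_mult_idem[OF s] by (auto simp: e_def)
  have st: "s = t \<cdot> e" using le nat_le_iff[OF s t] by (simp add: e_def)
  have "s\<^sup>-\<^sup>1 = e \<cdot> t\<^sup>-\<^sup>1" using sinv_mult[OF t eS] sinv_idem[OF e] st by simp
  then have D_s: "D (s\<^sup>-\<^sup>1) \<subseteq> D e \<inter> D (t\<^sup>-\<^sup>1)"
    using domain_subset_domain_mult_sinv[of "s\<^sup>-\<^sup>1"] domain_idem_inter_eq[OF e, of "t\<^sup>-\<^sup>1"] s t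
    by (auto simp: e_def)
  show ?thesis
  proof
    fix a
    show "\<gamma> s a = (\<gamma> t |` D (s\<^sup>-\<^sup>1)) a"
    proof (cases "a \<in> D (s\<^sup>-\<^sup>1)")
      case True
      then have "\<alpha> t a = \<alpha> t (\<alpha> e a)" using D_s action_idem[OF e] by auto
      also have "\<dots> = \<alpha> s a" using action_comp[OF t eS, of a] True D_s sinv_idem[OF e] st by auto
      finally show ?thesis using True D_s by (auto simp: gamma_act_def)
    next
      case False
      then show ?thesis by (simp add: gamma_act_def)
    qed
  qed
qed

end

theorem mainTheorem7:
  fixes S :: "'s set" and m :: "'s \<Rightarrow> 's \<Rightarrow> 's"
    and D :: "'s \<Rightarrow> 'a::ring set" and \<alpha> :: "'s \<Rightarrow> 'a \<Rightarrow> 'a"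
  assumes "inverse_semigroup S m"
    and "partial_action S m D \<alpha>"
  shows "premorphism S m sym_inv_carrier sym_inv_mult (gamma_act S m D \<alpha>)"
proof -
  interpret ring_partial_action S m D \<alpha>
    using assms by unfold_locales
  have "nat_le sym_inv_carrier sym_inv_mult (sym_inv_mult (\<gamma> s) (\<gamma> t)) (\<gamma> (m s t))"
    if "s \<in> S" "t \<in> S" for s t
    using gamma_mult_eq_restrict[OF that] nat_le_sym_inv_restrict by (simp add: sym_inv_mult_def)
  moreover have "sinv sym_inv_carrier sym_inv_mult (\<gamma> s) = \<gamma> (sinv S m s)" if "s \<in> S" for s
    by (rule sinv_sym_inv_eq_converse) (rule gamma_sinv_converse[OF that])
  moreover have "nat_le sym_inv_carrier sym_inv_mult (\<gamma> s) (\<gamma> t)"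
    if "s \<in> S" "t \<in> S" "nat_le S m s t" for s t
    using gamma_restrict_of_nat_le[OF that] nat_le_sym_inv_restrict by metis
  ultimately show ?thesis
    unfolding premorphism_def using gamma_in_sym_inv_carrier by blast
qed

end
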